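(* Let $\mathfrak{S}_H$ be a program sketch with set of holes $H$, let $\Phi$ be a specification, and let $R$ be a realisation of $\mathfrak{S}_H$. If $E$ is a program-level counterexample for the instance $\mathfrak{S}_H(R)$ and $\Phi$, then for every realisation $R'$ of $\mathfrak{S}_H$ with $\mathrm{Conflict}(E,R)\subseteq R'$, the set $E$ is also a program-level counterexample for $\mathfrak{S}_H(R')$ and $\Phi$.
   Context: Programs: a program $\mathcal{P}=(\mathrm{Var},E)$ consists of a finite set $\mathrm{Var}$ of variables, each with a finite integer range and an initial value, and a finite set $E$ of guarded commands of the form $g\to p_1:u_1+\dots+p_n:u_n$, where the guard $g$ is a Boolean expression over $\mathrm{Var}$, the $p_i$ are expressions over $\mathrm{Var}$ that evaluate to a probability distribution in every state satisfying $g$, and each update $u_i$ assigns expressions over $\mathrm{Var}$ to variables. A state is a valuation of $\mathrm{Var}$. A program is non-overlapping if no state satisfies the guards of two distinct commands; throughout, all programs (in particular all sketch instances) are assumed non-overlapping. The underlying MC $[\![\mathcal{P}]\!]$ has the valuations as states, the initial valuation as initial state, and from a state $s$ in which command $g\to\sum_i p_i:u_i$ is enabled it moves to $u_i(s)$ with probability $p_i(s)$ (summing coinciding successors). $\mathsf{fixdl}(\mathcal{P})$ is $\mathcal{P}$ extended with a command that is enabled exactly in states where no guard holds and produces a self-loop. For $E'\subseteq E$, $\mathcal{P}_{|E'}=(\mathrm{Var},E')$. A specification $\Phi$ is a finite set of reachability properties $\mathbb{P}_{\bowtie\lambda}(\lozenge G)$ ($\bowtie\in\{<,\leq,\geq,>\}$,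 $\lambda\in[0,1]$, $G$ a set of states given by a predicate); an MC satisfies $\Phi$ if the probability to reach $G$ from the initial state satisfies $\bowtie\lambda$ for every property, and $\mathcal{P}\models\Phi$ iff $[\![\mathsf{fixdl}(\mathcal{P})]\!]\models\Phi$. Program-level counterexample: for a program $\mathcal{P}=(\mathrm{Var},E)$ with $\mathcal{P}\not\models\Phi$, a set $E'\subseteq E$ is a program-level counterexample if for every non-overlapping program $\mathcal{P}'=(\mathrm{Var},E'')$ with $E''\supseteq E'$ we have $\mathsf{fixdl}(\mathcal{P}')\not\models\Phi$. Sketches: a sketch $\mathfrak{S}_H=(\mathcal{P}_H,\mathsf{Option}_H,\Gamma,\mathsf{cost})$ consists of a program $\mathcal{P}_H$ whose command expressions (guards, probabilities, updates) may contain hole symbols $h\in H$, a finite set $\mathsf{Option}_h$ of expressions over the program variables for each hole $h$, a set $\Gamma$ of propositional constraints over (named) options, and costs $\mathsf{cost}\colon\mathsf{Option}_H\to\mathbb{N}$. A realisation is a map $R$ with $R(h)\in\mathsf{Option}_h$ for every $h\in H$ satisfying all constraints in $\Gamma$; the instance $\mathfrak{S}_H(R)$ is the program obtained by replacing each hole $h$ by $R(h)$, so every command of $\mathfrak{S}_H(R)$ originates from a command of $\mathcal{P}_H$. A partial realisation is a map $\bar R$ with $\bar R(h)\in\mathsf{Option}_h\cup\{\bot\}$; $\bar R_1\subseteq\bar R_2$ iff $\bar R_1(h)\in\{\bar R_2(h),\bot\}$ for all $h$. For a set $E$ of commands of $\mathfrak{S}_H(R)$, $\mathrm{Conflict}(E,R)$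 is the partial realisation with $\mathrm{Conflict}(E,R)(h)=R(h)$ if $h$ occurs in some command of $\mathcal{P}_H$ from which a command of $E$ originates, and $\bot$ otherwise. *)

theory Defs
  imports Main "HOL.Real"
begin

text \<open>Expressions over atoms of type 'a (program variables, or variables and holes).
  Values are reals; Boolean expressions are true iff their value is nonzero.\<close>

datatype 'a exp =
    Atom 'a
  | Const real
  | EUn "real \<Rightarrow> real" "'a exp"
  | EBin "real \<Rightarrow> real \<Rightarrow> real" "'a exp" "'a exp"

fun eval :: "('a \<Rightarrow> real) \<Rightarrow> 'a exp \<Rightarrow> real" where
  "eval \<rho> (Atom a) = \<rho> a"
| "eval \<rho> (Const r) = r"
| "eval \<rho> (EUn f e) = f (eval \<rho> e)"
| "eval \<rho> (EBin f e1 e2) = f (eval \<rho> e1) (eval \<rho> e2)"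

fun exp_bind :: "'a exp \<Rightarrow> ('a \<Rightarrow> 'b exp) \<Rightarrow> 'b exp" where
  "exp_bind (Atom a) \<sigma> = \<sigma> a"
| "exp_bind (Const r) \<sigma> = Const r"
| "exp_bind (EUn f e) \<sigma> = EUn f (exp_bind e \<sigma>)"
| "exp_bind (EBin f e1 e2) \<sigma> = EBin f (exp_bind e1 \<sigma>) (exp_bind e2 \<sigma>)"

text \<open>A guarded command  g \<rightarrow> p1:u1 + ... + pn:un ; an update is a list of
  assignments  (x := e).\<close>

datatype ('v, 'a) cmd = Cmd (guard: "'a exp") (branches: "('a exp \<times> ('v \<times> 'a exp) list) list")

record 'v decl =
  vars :: "'v set"
  lo   :: "'v \<Rightarrow> int"
  hi   :: "'v \<Rightarrow> int"
  init :: "'v \<Rightarrow> int"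

type_synonym 'v state = "'v \<Rightarrow> int"
type_synonym 'v program = "'v decl \<times> ('v, 'v) cmd set"

definition env :: "'v state \<Rightarrow> 'v \<Rightarrow> real" where
  "env s = (\<lambda>v. real_of_int (s v))"

definition holds :: "'v exp \<Rightarrow> 'v state \<Rightarrow> bool" where
  "holds g s \<longleftrightarrow> eval (env s) g \<noteq> 0"

text \<open>Simultaneous assignment (first assignment to a variable counts).\<close>
definition apply_upd :: "('v \<times> 'v exp) list \<Rightarrow> 'v state \<Rightarrow> 'v state" where
  "apply_upd u s = (\<lambda>v. case map_of u v of None \<Rightarrow> s v | Some e \<Rightarrow> \<lfloor>eval (env s) e\<rfloor>)"

definition States :: "'v decl \<Rightarrow> 'v state set" where
  "States d = {s. (\<forall>v\<in>vars d. lo d v \<le> s v \<and> s v \<le> hi d v) \<and> (\<forall>v. v \<notin> vars d \<longrightarrow> s v = 0)}"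

definition init_state :: "'v decl \<Rightarrow> 'v state" where
  "init_state d = (\<lambda>v. if v \<in> vars d then init d v else 0)"

definition is_program :: "'v program \<Rightarrow> bool" where
  "is_program P \<longleftrightarrow> (let d = fst P; E = snd P in
     finite (vars d) \<and> (\<forall>v\<in>vars d. lo d v \<le> init d v \<and> init d v \<le> hi d v) \<and> finite E \<and>
     (\<forall>c\<in>E. \<forall>s\<in>States d. holds (guard c) s \<longrightarrow>
        (\<forall>(p, u)\<in>set (branches c). eval (env s) p \<ge> 0) \<and>
        (\<Sum>(p, u)\<leftarrow>branches c. eval (env s) p) = 1))"

definition non_overlapping :: "'v program \<Rightarrow> bool" where
  "non_overlapping P \<longleftrightarrow> (\<forall>s\<in>States (fst P). \<forall>c1\<in>snd P. \<forall>c2\<in>snd P.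
      holds (guard c1) s \<and> holds (guard c2) s \<longrightarrow> c1 = c2)"

text \<open>fixdl: add a command enabled exactly when no guard holds, producing a self-loop.\<close>
definition any_guard :: "('v, 'v) cmd set \<Rightarrow> 'v exp" where
  "any_guard E = foldr (\<lambda>c acc. EBin (\<lambda>a b. if a \<noteq> 0 \<or> b \<noteq> 0 then 1 else 0) (guard c) acc)
                   (SOME xs. set xs = E) (Const 0)"

definition fixdl :: "'v program \<Rightarrow> 'v program" where
  "fixdl P = (fst P, insert (Cmd (EUn (\<lambda>x. if x = 0 then 1 else 0) (any_guard (snd P))) [(Const 1, [])]) (snd P))"

definition enabled_cmd :: "('v, 'v) cmd set \<Rightarrow> 'v state \<Rightarrow> ('v, 'v) cmd option" where
  "enabled_cmd E s = (if \<exists>c\<in>E. holds (guard c) s then Some (SOME c. c \<in> E \<and> holds (guard c) s) else None)"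

text \<open>Transition probability (coinciding successors are summed).\<close>
definition trans_prob :: "'v program \<Rightarrow> 'v state \<Rightarrow> 'v state \<Rightarrow> real" where
  "trans_prob P s t = (case enabled_cmd (snd P) s of None \<Rightarrow> 0
     | Some c \<Rightarrow> (\<Sum>(p, u)\<leftarrow>branches c. if apply_upd u s = t then eval (env s) p else 0))"

definition succs :: "'v program \<Rightarrow> 'v state \<Rightarrow> 'v state set" where
  "succs P s = (case enabled_cmd (snd P) s of None \<Rightarrow> {}
     | Some c \<Rightarrow> set (map (\<lambda>(p, u). apply_upd u s) (branches c)))"

fun reach_n :: "'v program \<Rightarrow> ('v state \<Rightarrow> bool) \<Rightarrow> nat \<Rightarrow> 'v state \<Rightarrow> real" where
  "reach_n P G 0 s = (if G s then 1 else 0)"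
| "reach_n P G (Suc n) s = (if G s then 1 else (\<Sum>t\<in>succs P s. trans_prob P s t * reach_n P G n t))"

definition reach_prob :: "'v program \<Rightarrow> ('v state \<Rightarrow> bool) \<Rightarrow> real" where
  "reach_prob P G = (SUP n. reach_n P G n (init_state (fst P)))"

datatype cmp = Lt | Le | Ge | Gt

fun cmp_holds :: "cmp \<Rightarrow> real \<Rightarrow> real \<Rightarrow> bool" where
  "cmp_holds Lt x l = (x < l)"
| "cmp_holds Le x l = (x \<le> l)"
| "cmp_holds Ge x l = (x \<ge> l)"
| "cmp_holds Gt x l = (x > l)"

text \<open>A reachability property  P_{cmp l}(<> G).\<close>
type_synonym 'v property = "cmp \<times> real \<times> ('v state \<Rightarrow> bool)"
type_synonym 'v spec = "'v property set"

definition wf_spec :: "'v spec \<Rightarrow> bool" where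
  "wf_spec \<Phi> \<longleftrightarrow> finite \<Phi> \<and> (\<forall>(c, l, G)\<in>\<Phi>. 0 \<le> l \<and> l \<le> 1)"

definition mc_sat :: "'v program \<Rightarrow> 'v spec \<Rightarrow> bool" where
  "mc_sat P \<Phi> \<longleftrightarrow> (\<forall>(c, l, G)\<in>\<Phi>. cmp_holds c (reach_prob P G) l)"

definition models :: "'v program \<Rightarrow> 'v spec \<Rightarrow> bool" where
  "models P \<Phi> \<longleftrightarrow> mc_sat (fixdl P) \<Phi>"

definition prog_cex :: "'v program \<Rightarrow> 'v spec \<Rightarrow> ('v, 'v) cmd set \<Rightarrow> bool" where
  "prog_cex P \<Phi> E' \<longleftrightarrow> \<not> models P \<Phi> \<and> E' \<subseteq> snd P \<and>
     (\<forall>E''. E' \<subseteq> E'' \<and> is_program (fst P, E'') \<and> non_overlapping (fst P, E'')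
        \<longrightarrow> \<not> mc_sat (fixdl (fst P, E'')) \<Phi>)"

datatype 'a pform = PTrue | PAtom 'a | PNot "'a pform" | PAnd "'a pform" "'a pform" | POr "'a pform" "'a pform"

text \<open>Atoms of constraints are named options: PAtom (h, o) means "hole h takes option o".\<close>
fun pf_sat :: "('h \<Rightarrow> 'v exp) \<Rightarrow> ('h \<times> 'v exp) pform \<Rightarrow> bool" where
  "pf_sat R PTrue = True"
| "pf_sat R (PAtom (h, e)) = (R h = e)"
| "pf_sat R (PNot f) = (\<not> pf_sat R f)"
| "pf_sat R (PAnd f g) = (pf_sat R f \<and> pf_sat R g)"
| "pf_sat R (POr f g) = (pf_sat R f \<or> pf_sat R g)"

record ('v, 'h) sketch =
  sk_decl   :: "'v decl"
  sk_cmds   :: "('v, 'v + 'h) cmd set"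
  sk_holes  :: "'h set"
  sk_opts   :: "'h \<Rightarrow> 'v exp set"
  sk_constr :: "('h \<times> 'v exp) pform set"
  sk_cost   :: "'h \<Rightarrow> 'v exp \<Rightarrow> nat"

definition exp_holes :: "('v + 'h) exp \<Rightarrow> 'h set" where
  "exp_holes e = {h. Inr h \<in> set_exp e}"

definition cmd_holes :: "('v, 'v + 'h) cmd \<Rightarrow> 'h set" where
  "cmd_holes c = exp_holes (guard c) \<union>
     (\<Union>(p, u)\<in>set (branches c). exp_holes p \<union> (\<Union>(x, e)\<in>set u. exp_holes e))"

definition wf_sketch :: "('v, 'h) sketch \<Rightarrow> bool" where
  "wf_sketch S \<longleftrightarrow> finite (sk_holes S) \<and> finite (sk_cmds S) \<and> finite (sk_constr S) \<and>
     (\<forall>c\<in>sk_cmds S. cmd_holes c \<subseteq> sk_holes S) \<and> (\<forall>h\<in>sk_holes S. finite (sk_opts S h))"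

definition inst_exp :: "('h \<Rightarrow> 'v exp) \<Rightarrow> ('v + 'h) exp \<Rightarrow> 'v exp" where
  "inst_exp R e = exp_bind e (\<lambda>a. case a of Inl v \<Rightarrow> Atom v | Inr h \<Rightarrow> R h)"

definition inst_cmd :: "('h \<Rightarrow> 'v exp) \<Rightarrow> ('v, 'v + 'h) cmd \<Rightarrow> ('v, 'v) cmd" where
  "inst_cmd R c = Cmd (inst_exp R (guard c))
      (map (\<lambda>(p, u). (inst_exp R p, map (\<lambda>(x, e). (x, inst_exp R e)) u)) (branches c))"

definition realisation :: "('v, 'h) sketch \<Rightarrow> ('h \<Rightarrow> 'v exp) \<Rightarrow> bool" where
  "realisation S R \<longleftrightarrow> (\<forall>h\<in>sk_holes S. R h \<in> sk_opts S h) \<and> (\<forall>f\<in>sk_constr S. pf_sat R f)"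

definition sk_instance :: "('v, 'h) sketch \<Rightarrow> ('h \<Rightarrow> 'v exp) \<Rightarrow> 'v program" where
  "sk_instance S R = (sk_decl S, inst_cmd R ` sk_cmds S)"

text \<open>Partial realisations (None = \<bottom>) and their order.\<close>
type_synonym ('h, 'v) prealisation = "'h \<Rightarrow> 'v exp option"

definition pr_le :: "('h, 'v) prealisation \<Rightarrow> ('h, 'v) prealisation \<Rightarrow> bool" where
  "pr_le R1 R2 \<longleftrightarrow> (\<forall>h. R1 h = None \<or> R1 h = R2 h)"

definition as_partial :: "('v, 'h) sketch \<Rightarrow> ('h \<Rightarrow> 'v exp) \<Rightarrow> ('h, 'v) prealisation" where
  "as_partial S R = (\<lambda>h. if h \<in> sk_holes S then Some (R h) else None)"

definition Conflict :: "('v, 'h) sketch \<Rightarrow> ('v, 'v) cmd set \<Rightarrow> ('h \<Rightarrow> 'v exp) \<Rightarrow> ('h, 'v) prealisation" where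
  "Conflict S E R = (\<lambda>h. if \<exists>c\<in>sk_cmds S. inst_cmd R c \<in> E \<and> h \<in> cmd_holes c then Some (R h) else None)"

end

theory Submission
  imports Defs
begin

text \<open>The commands of E arise only from sketch commands whose
  holes are fixed by Conflict(E, R); any realisation R' agreeing with R there instantiates these
  commands identically, so E is again contained in the instance for R', and the defining property
  of E carries over verbatim.\<close>

lemma inst_exp_cong:
  "(\<And>h. h \<in> exp_holes e \<Longrightarrow> R h = R' h) \<Longrightarrow> inst_exp R e = inst_exp R' e"
  by (induction e) (auto simp: inst_exp_def exp_holes_def split: sum.splits)

lemma inst_cmd_cong:
  assumes "\<And>h. h \<in> cmd_holes c \<Longrightarrow> R h = R' h"
  shows "inst_cmd R c = inst_cmd R' c"
  using assms
  by (cases c) (fastforce simp: inst_cmd_def cmd_holes_def intro!: inst_exp_cong map_cong)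

lemma inst_cmd_eq_if_Conflict_le:
  assumes "pr_le (Conflict S E R) (as_partial S R')"
    and "c \<in> sk_cmds S" and "inst_cmd R c \<in> E"
  shows "inst_cmd R' c = inst_cmd R c"
proof (rule inst_cmd_cong)
  fix h assume "h \<in> cmd_holes c"
  then have "Conflict S E R h = Some (R h)"
    using assms(2,3) by (auto simp: Conflict_def)
  then have "as_partial S R' h = Some (R h)"
    using assms(1) by (metis pr_le_def option.distinct(1))
  then show "R' h = R h"
    by (auto simp: as_partial_def split: if_splits)
qed

lemma Conflict_le_preserves_subset_instance:
  assumes "pr_le (Conflict S E R) (as_partial S R')"
    and "E \<subseteq> snd (sk_instance S R)"
  shows "E \<subseteq> snd (sk_instance S R')"
proof
  fix e assume "e \<in> E"
  then obtain c where "c \<in> sk_cmds S" "e = inst_cmd R c"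
    using assms(2) by (auto simp: sk_instance_def)
  with \<open>e \<in> E\<close> assms(1) show "e \<in> snd (sk_instance S R')"
    by (metis inst_cmd_eq_if_Conflict_le image_eqI sk_instance_def snd_conv)
qed

lemma prog_cex_transfer:
  assumes "prog_cex P \<Phi> E"
    and "fst P' = fst P" and "E \<subseteq> snd P'"
    and "is_program P'" and "non_overlapping P'"
  shows "prog_cex P' \<Phi> E"
proof -
  have refutes: "\<not> mc_sat (fixdl (fst P, E'')) \<Phi>"
    if "E \<subseteq> E''" "is_program (fst P, E'')" "non_overlapping (fst P, E'')" for E''
    using assms(1) that by (simp add: prog_cex_def)
  have "\<not> models P' \<Phi>"
    using refutes[of "snd P'"] assms(2-5) by (metis models_def order_refl prod.collapse)
  then show ?thesis
    using refutes assms(2,3) by (simp add: prog_cex_def)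
qed

theorem proposition2:
  fixes S :: "('v, 'h) sketch" and \<Phi> :: "'v spec" and R :: "'h \<Rightarrow> 'v exp"
    and E :: "('v, 'v) cmd set"
  assumes "wf_sketch S"
    and "wf_spec \<Phi>"
    and "\<forall>R0. realisation S R0 \<longrightarrow> is_program (sk_instance S R0) \<and> non_overlapping (sk_instance S R0)"
    and "realisation S R"
    and "prog_cex (sk_instance S R) \<Phi> E"
  shows "\<forall>R'. realisation S R' \<and> pr_le (Conflict S E R) (as_partial S R')
           \<longrightarrow> prog_cex (sk_instance S R') \<Phi> E"
proof (intro allI impI, elim conjE)
  fix R' assume R': "realisation S R'" and le: "pr_le (Conflict S E R) (as_partial S R')"
  have "E \<subseteq> snd (sk_instance S R)"
    using assms(5) by (simp add: prog_cex_def)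
  then have "E \<subseteq> snd (sk_instance S R')"
    by (rule Conflict_le_preserves_subset_instance[OF le])
  moreover have "fst (sk_instance S R') = fst (sk_instance S R)"
    by (simp add: sk_instance_def)
  ultimately show "prog_cex (sk_instance S R') \<Phi> E"
    using prog_cex_transfer[OF assms(5)] assms(3) R' by blast
qed

end
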